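(* For every hypergraph $\mathcal{H}$ we have $\tau_2(\mathcal{H})/2\le \mathrm{dec}(\mathcal{H})\le \tau_2(\mathcal{H})-1$, and both bounds are tight (each holds with equality for some hypergraphs). In particular, $\tau_2(\mathcal{H})$ is a 2-approximation for $\mathrm{dec}(\mathcal{H})$.
   Context: A hypergraph $\mathcal{H}=(X,\mathcal{E})$ has a finite vertex set $X$, $|X|=n$, and a family of edges, each a subset of $X$ with at least 2 vertices. A C-coloring is a map $\varphi:X\to\mathbb{N}$ such that every edge contains two distinct vertices of the same color; $\overline{\chi}(\mathcal{H})$ is the maximum number of colors used by a C-coloring and $\mathrm{dec}(\mathcal{H})=n-\overline{\chi}(\mathcal{H})$. $\tau_2(\mathcal{H})$ is the minimum size of a set $T\subseteq X$ with $|E\cap T|\ge2$ for every edge $E$. *)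

theory Defs
  imports Complex_Main
begin

definition hypergraph :: "'a set \<Rightarrow> 'a set set \<Rightarrow> bool" where
  "hypergraph X E \<longleftrightarrow> finite X \<and> E \<noteq> {} \<and> (\<forall>e\<in>E. e \<subseteq> X \<and> card e \<ge> 2)"

definition C_coloring :: "'a set set \<Rightarrow> ('a \<Rightarrow> nat) \<Rightarrow> bool" where
  "C_coloring E \<phi> \<longleftrightarrow> (\<forall>e\<in>E. \<exists>x\<in>e. \<exists>y\<in>e. x \<noteq> y \<and> \<phi> x = \<phi> y)"

definition upper_chi :: "'a set \<Rightarrow> 'a set set \<Rightarrow> nat" where
  "upper_chi X E = Max {card (\<phi> ` X) | \<phi>. C_coloring E \<phi>}"

definition dec :: "'a set \<Rightarrow> 'a set set \<Rightarrow> nat" where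
  "dec X E = card X - upper_chi X E"

definition tau2 :: "'a set \<Rightarrow> 'a set set \<Rightarrow> nat" where
  "tau2 X E = Min {card T | T. T \<subseteq> X \<and> (\<forall>e\<in>E. card (e \<inter> T) \<ge> 2)}"

end

theory Submission
  imports Defs
begin

text \<open>For the lower bound, take an optimal C-coloring and let T be the set of vertices
  whose color is shared with another vertex. Every edge contains a monochromatic pair,
  so T is a 2-transversal; every color of T is used at least twice, so T loses at least
  card T / 2 colors, while the vertices outside T have pairwise distinct colors. Hence
  tau2 \<le> card T \<le> 2 dec. For the upper bound, color an optimal 2-transversal T with
  a single color and all other vertices with distinct fresh colors: this is a
  C-coloring with card X - card T + 1 colors, so dec \<le> tau2 - 1. A single edge with
  two vertices attains both bounds.\<close>

lemma two_le_card_iff: "2 \<le> card A \<longleftrightarrow> finite A \<and> (\<exists>x\<in>A. \<exists>y\<in>A. x \<noteq> y)"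
  by (metis One_nat_def Suc_1 card.infinite card_le_Suc0_iff_eq
      less_2_cases_iff not_less_eq_eq order.strict_iff_not)

definition colliding :: "('a \<Rightarrow> 'b) \<Rightarrow> 'a set \<Rightarrow> 'a set" where
  "colliding \<phi> X = {x \<in> X. \<exists>y\<in>X. y \<noteq> x \<and> \<phi> y = \<phi> x}"

lemma collidingI: "x \<in> X \<Longrightarrow> y \<in> X \<Longrightarrow> y \<noteq> x \<Longrightarrow> \<phi> y = \<phi> x \<Longrightarrow> x \<in> colliding \<phi> X"
  unfolding colliding_def by blast

lemma colliding_subset: "colliding \<phi> X \<subseteq> X"
  by (auto simp: colliding_def)

lemma twice_card_image_colliding_le:
  assumes "finite X"
  shows "2 * card (\<phi> ` colliding \<phi> X) \<le> card (colliding \<phi> X)"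
proof -
  let ?T = "colliding \<phi> X"
  have fin: "finite ?T"
    using finite_subset[OF colliding_subset assms] .
  have "(\<Sum>c\<in>\<phi> ` ?T. (2::nat)) \<le> (\<Sum>c\<in>\<phi> ` ?T. card {x \<in> ?T. \<phi> x = c})"
  proof (rule sum_mono)
    fix c assume "c \<in> \<phi> ` ?T"
    then obtain x y where "x \<in> X" "y \<in> X" "y \<noteq> x" "\<phi> y = \<phi> x" "\<phi> x = c"
      by (auto simp: colliding_def)
    then have "x \<in> {x \<in> ?T. \<phi> x = c}" "y \<in> {x \<in> ?T. \<phi> x = c}"
      by (auto simp: colliding_def)
    with \<open>y \<noteq> x\<close> fin show "2 \<le> card {x \<in> ?T. \<phi> x = c}"
      by (auto simp: two_le_card_iff)
  qed
  also have "\<dots> = card ?T"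
    using sum.group[OF fin finite_imageI[OF fin] subset_refl, where g = \<phi> and h = "\<lambda>_. 1 :: nat"]
    by simp
  finally show ?thesis
    by simp
qed

lemma card_image_split_colliding:
  assumes "finite X"
  shows "card (\<phi> ` X) = card (\<phi> ` colliding \<phi> X) + card (X - colliding \<phi> X)"
proof -
  let ?T = "colliding \<phi> X"
  have sub: "?T \<subseteq> X"
    by (rule colliding_subset)
  have disj: "\<phi> ` ?T \<inter> \<phi> ` (X - ?T) = {}"
  proof (rule equals0I)
    fix c assume "c \<in> \<phi> ` ?T \<inter> \<phi> ` (X - ?T)"
    then obtain a b where a: "a \<in> ?T" "\<phi> a = c" and b: "b \<in> X" "b \<notin> ?T" "\<phi> b = c"
      by (elim IntE imageE DiffE) simp
    have "a \<in> X" "a \<noteq> b"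
      using a b sub by blast+
    then have "b \<in> ?T"
      using a b by (intro collidingI) simp_all
    with b(2) show False
      by contradiction
  qed
  have "inj_on \<phi> (X - ?T)"
    unfolding inj_on_def colliding_def by blast
  then have "card (\<phi> ` (X - ?T)) = card (X - ?T)"
    by (rule card_image)
  moreover have "\<phi> ` X = \<phi> ` ?T \<union> \<phi> ` (X - ?T)"
    using sub by blast
  moreover have "finite ?T" "finite (X - ?T)"
    using finite_subset[OF sub assms] assms by simp_all
  ultimately show ?thesis
    using card_Un_disjoint[OF finite_imageI finite_imageI disj] by simp
qed

lemma card_colliding_le:
  assumes "finite X"
  shows "card (colliding \<phi> X) \<le> 2 * (card X - card (\<phi> ` X))"
proof -
  have sub: "colliding \<phi> X \<subseteq> X"
    by (rule colliding_subset)
  have "card X = card (colliding \<phi> X) + card (X - colliding \<phi> X)"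
    using card_Diff_subset[OF finite_subset[OF sub assms] sub] card_mono[OF assms sub] by simp
  then show ?thesis
    using twice_card_image_colliding_le[OF assms, of \<phi>]
      card_image_split_colliding[OF assms, of \<phi>]
    by linarith
qed

lemma two_le_card_edge_inter_colliding:
  assumes "C_coloring E \<phi>" "e \<in> E" "e \<subseteq> X" "finite X"
  shows "2 \<le> card (e \<inter> colliding \<phi> X)"
proof -
  obtain x y where "x \<in> e" "y \<in> e" "x \<noteq> y" "\<phi> x = \<phi> y"
    using assms(1,2) by (auto simp: C_coloring_def)
  moreover have "finite (e \<inter> colliding \<phi> X)"
    using assms(3) by (intro finite_subset[OF _ assms(4)]) (auto simp: colliding_def)
  moreover have "x \<in> colliding \<phi> X" "y \<in> colliding \<phi> X"
    using calculation assms(3) by (auto intro: collidingI)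
  ultimately show ?thesis
    unfolding two_le_card_iff by blast
qed

lemma C_coloring_if_constant_on:
  assumes "\<forall>e\<in>E. 2 \<le> card (e \<inter> T)" and "\<forall>x\<in>T. \<phi> x = c"
  shows "C_coloring E \<phi>"
  unfolding C_coloring_def
proof
  fix e assume "e \<in> E"
  then obtain x y where "x \<in> e \<inter> T" "y \<in> e \<inter> T" "x \<noteq> y"
    using assms(1) by (auto simp: two_le_card_iff)
  moreover have "\<phi> x = \<phi> y"
    using assms(2) \<open>x \<in> e \<inter> T\<close> \<open>y \<in> e \<inter> T\<close> by simp
  ultimately show "\<exists>x\<in>e. \<exists>y\<in>e. x \<noteq> y \<and> \<phi> x = \<phi> y"
    by blast
qed

lemma coloring_collapsing:
  assumes "finite X" "T \<subseteq> X" "T \<noteq> {}"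
  obtains \<phi> :: "'a \<Rightarrow> nat" where "\<forall>x\<in>T. \<phi> x = 0"
    and "card (\<phi> ` X) = Suc (card X - card T)"
proof -
  obtain f :: "'a \<Rightarrow> nat" where f: "inj_on f X"
    using finite_imp_inj_to_nat_seg[OF assms(1)] by blast
  define \<phi> where "\<phi> x = (if x \<in> T then 0 else Suc (f x))" for x
  have "\<phi> ` X = insert 0 (\<phi> ` (X - T))"
    using assms(2,3) by (auto simp: \<phi>_def)
  moreover have "0 \<notin> \<phi> ` (X - T)"
    by (auto simp: \<phi>_def)
  moreover have "inj_on \<phi> (X - T)"
    using f by (auto simp: \<phi>_def inj_on_def)
  ultimately have "card (\<phi> ` X) = Suc (card X - card T)"
    using assms by (simp add: card_image card_Diff_subset finite_subset)
  moreover have "\<forall>x\<in>T. \<phi> x = 0"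
    by (simp add: \<phi>_def)
  ultimately show thesis
    using that by blast
qed

lemma C_coloring_const:
  assumes "hypergraph X E"
  shows "C_coloring E (\<lambda>_. c)"
proof (rule C_coloring_if_constant_on[of E X _ c])
  show "\<forall>e\<in>E. 2 \<le> card (e \<inter> X)"
    using assms by (auto simp: hypergraph_def Int_absorb2)
qed simp

lemma upper_chi_values:
  assumes "hypergraph X E"
  shows "finite {card (\<phi> ` X) | \<phi>. C_coloring E \<phi>}"
    and "{card (\<phi> ` X) | \<phi>. C_coloring E \<phi>} \<noteq> {}"
proof -
  have "{card (\<phi> ` X) | \<phi>. C_coloring E \<phi>} \<subseteq> {..card X}"
    using assms by (auto simp: hypergraph_def card_image_le)
  then show "finite {card (\<phi> ` X) | \<phi>. C_coloring E \<phi>}"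
    by (rule finite_subset[OF _ finite_atMost])
  show "{card (\<phi> ` X) | \<phi>. C_coloring E \<phi>} \<noteq> {}"
    using C_coloring_const[OF assms] by blast
qed

lemma upper_chi_attained:
  assumes "hypergraph X E"
  obtains \<phi> where "C_coloring E \<phi>" and "upper_chi X E = card (\<phi> ` X)"
  using Max_in[OF upper_chi_values[OF assms]] that by (auto simp: upper_chi_def)

lemma card_image_le_upper_chi:
  assumes "hypergraph X E" "C_coloring E \<phi>"
  shows "card (\<phi> ` X) \<le> upper_chi X E"
  unfolding upper_chi_def using assms(2) by (intro Max_ge[OF upper_chi_values(1)[OF assms(1)]]) blast

lemma tau2_values:
  assumes "hypergraph X E"
  shows "finite {card T | T. T \<subseteq> X \<and> (\<forall>e\<in>E. 2 \<le> card (e \<inter> T))}"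
    and "{card T | T. T \<subseteq> X \<and> (\<forall>e\<in>E. 2 \<le> card (e \<inter> T))} \<noteq> {}"
proof -
  have "finite X"
    using assms by (simp add: hypergraph_def)
  then have "{card T | T. T \<subseteq> X \<and> (\<forall>e\<in>E. 2 \<le> card (e \<inter> T))} \<subseteq> {..card X}"
    using card_mono by fastforce
  then show "finite {card T | T. T \<subseteq> X \<and> (\<forall>e\<in>E. 2 \<le> card (e \<inter> T))}"
    by (rule finite_subset[OF _ finite_atMost])
  have "\<forall>e\<in>E. 2 \<le> card (e \<inter> X)"
    using assms by (auto simp: hypergraph_def Int_absorb2)
  then show "{card T | T. T \<subseteq> X \<and> (\<forall>e\<in>E. 2 \<le> card (e \<inter> T))} \<noteq> {}"
    by auto
qed

lemma tau2_attained:
  assumes "hypergraph X E"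
  obtains T where "T \<subseteq> X" and "\<forall>e\<in>E. 2 \<le> card (e \<inter> T)" and "tau2 X E = card T"
  using Min_in[OF tau2_values[OF assms]] unfolding tau2_def by (blast intro: that)

lemma tau2_le_card:
  assumes "hypergraph X E" "T \<subseteq> X" "\<forall>e\<in>E. 2 \<le> card (e \<inter> T)"
  shows "tau2 X E \<le> card T"
  unfolding tau2_def using assms(2,3) by (intro Min_le[OF tau2_values(1)[OF assms(1)]]) blast

lemma tau2_le_twice_dec:
  assumes h: "hypergraph X E"
  shows "tau2 X E \<le> 2 * dec X E"
proof -
  have fin: "finite X" and edges: "\<forall>e\<in>E. e \<subseteq> X"
    using h by (auto simp: hypergraph_def)
  obtain \<phi> where col: "C_coloring E \<phi>" and chi: "upper_chi X E = card (\<phi> ` X)"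
    using upper_chi_attained[OF h] .
  have "tau2 X E \<le> card (colliding \<phi> X)"
    using tau2_le_card[OF h colliding_subset] two_le_card_edge_inter_colliding[OF col _ _ fin]
      edges by blast
  also have "\<dots> \<le> 2 * dec X E"
    using card_colliding_le[OF fin] chi by (simp add: dec_def)
  finally show ?thesis .
qed

lemma dec_less_tau2:
  assumes h: "hypergraph X E"
  shows "dec X E < tau2 X E"
proof -
  obtain T where TX: "T \<subseteq> X" and trans: "\<forall>e\<in>E. 2 \<le> card (e \<inter> T)"
    and tau: "tau2 X E = card T"
    using tau2_attained[OF h] .
  have fin: "finite X"
    using h by (simp add: hypergraph_def)
  have "T \<noteq> {}"
    using h trans by (auto simp: hypergraph_def)
  moreover have "finite T"
    using finite_subset[OF TX fin] .
  ultimately have pos: "0 < card T"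
    by (simp add: card_gt_0_iff)
  from \<open>T \<noteq> {}\<close> obtain \<phi> :: "'a \<Rightarrow> nat" where const: "\<forall>x\<in>T. \<phi> x = 0"
    and card_img: "card (\<phi> ` X) = Suc (card X - card T)"
    using coloring_collapsing[OF fin TX] by blast
  have "card (\<phi> ` X) \<le> upper_chi X E"
    using card_image_le_upper_chi[OF h C_coloring_if_constant_on[OF trans const]] .
  then have "Suc (card X - card T) \<le> upper_chi X E"
    by (simp add: card_img)
  moreover have "card T \<le> card X"
    using card_mono[OF fin TX] .
  ultimately show ?thesis
    using tau pos by (simp add: dec_def)
qed

lemma single_edge:
  shows "hypergraph {0::nat, 1} {{0, 1}}"
    and "tau2 {0::nat, 1} {{0, 1}} = 2"
    and "dec {0::nat, 1} {{0, 1}} = 1"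
proof -
  show h: "hypergraph {0::nat, 1} {{0, 1}}"
    by (simp add: hypergraph_def)
  have "tau2 {0::nat, 1} {{0, 1}} \<le> 2"
    using tau2_le_card[OF h, of "{0, 1}"] by simp
  moreover have "dec {0::nat, 1} {{0, 1}} = 1"
  proof -
    obtain \<phi> where col: "C_coloring {{0::nat, 1}} \<phi>"
      and chi: "upper_chi {0::nat, 1} {{0, 1}} = card (\<phi> ` {0, 1})"
      using upper_chi_attained[OF h] .
    have "\<phi> 0 = \<phi> 1"
      using col unfolding C_coloring_def by fastforce
    then show ?thesis
      using chi by (simp add: dec_def)
  qed
  ultimately show "tau2 {0::nat, 1} {{0, 1}} = 2" "dec {0::nat, 1} {{0, 1}} = 1"
    using tau2_le_twice_dec[OF h] dec_less_tau2[OF h] by linarith+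
qed

theorem proposition1:
  shows "(\<forall>(X::'a set) E. hypergraph X E \<longrightarrow>
            real (tau2 X E) / 2 \<le> real (dec X E) \<and> real (dec X E) \<le> real (tau2 X E) - 1)
       \<and> (\<exists>(X::nat set) E. hypergraph X E \<and> real (tau2 X E) / 2 = real (dec X E))
       \<and> (\<exists>(X::nat set) E. hypergraph X E \<and> real (dec X E) = real (tau2 X E) - 1)"
proof (intro conjI allI impI)
  fix X :: "'a set" and E assume h: "hypergraph X E"
  show "real (tau2 X E) / 2 \<le> real (dec X E)"
    using tau2_le_twice_dec[OF h] by linarith
  show "real (dec X E) \<le> real (tau2 X E) - 1"
    using dec_less_tau2[OF h] by linarith
next
  show "\<exists>(X::nat set) E. hypergraph X E \<and> real (tau2 X E) / 2 = real (dec X E)"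
    using single_edge by (intro exI[of _ "{0::nat, 1}"] exI[of _ "{{0, 1}}"]) simp
  show "\<exists>(X::nat set) E. hypergraph X E \<and> real (dec X E) = real (tau2 X E) - 1"
    using single_edge by (intro exI[of _ "{0::nat, 1}"] exI[of _ "{{0, 1}}"]) simp
qed

end
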